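(* Let $\mathfrak{F}=(Z_1,Z_\partial,I,R_\Diamond,R_\Box,R_\triangledown,T)$ be a frame (in the sense of the context). Define $\blacktriangledown:\mathcal{P}(Z_1)\to\mathcal{P}(Z_\partial)$ and $\boxtimes:\mathcal{P}(Z_\partial)\to\mathcal{P}(Z_1)$ by $\blacktriangledown U=\{y\in Z_\partial\mid \exists x\in Z_1\,(y R_\triangledown x \wedge x\in U)\}$ and $\boxtimes V=\{x\in Z_1\mid \forall y\in Z_\partial\,(x R''_\triangledown y\to y\in V)\}$, and for a stable set $A$ let $\triangledown A=(\blacktriangledown A)'$. Then for every Galois stable set $A\subseteq Z_1$ and every Galois co-stable set $B\subseteq Z_\partial$: $$(\blacktriangledown A)'=\triangledown A=\boxtimes A' \qquad\text{and}\qquad \triangledown B'=\boxtimes B=(\blacktriangledown B')'.$$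
   Context: A frame is a tuple $\mathfrak{F}=(Z_1,Z_\partial,I,R_\Diamond,R_\Box,R_\triangledown,T)$ where $Z_1,Z_\partial$ are nonempty sets, $I\subseteq Z_1\times Z_\partial$, $R_\Diamond\subseteq Z_1\times Z_1$, $R_\Box\subseteq Z_\partial\times Z_\partial$, $R_\triangledown\subseteq Z_\partial\times Z_1$ and $T\subseteq Z_\partial\times Z_1\times Z_\partial$. Write $x\nmid y$ iff not $xIy$. For $U\subseteq Z_1$ put $U'=\{y\in Z_\partial\mid \forall u\in U\; u\nmid y\}$ and for $V\subseteq Z_\partial$ put $V'=\{x\in Z_1\mid\forall v\in V\; x\nmid v\}$; $U$ is (Galois) stable iff $U''=U$, $V$ is co-stable iff $V''=V$. On each sort define $u\le w$ iff $\{u\}'\subseteq\{w\}'$; the frame is separated iff $\le$ is antisymmetric. Galois dual relations: $yR'_\Diamond z$ iff $\forall x\,(xR_\Diamond z\to x\nmid y)$ (for $y\in Z_\partial,z\in Z_1$); $xR'_\Box v$ iff $\forall y\,(yR_\Box v\to x\nmid y)$ (for $x\in Z_1,v\in Z_\partial$); $zR'_\triangledown x$ iff $\forall y\in Z_\partial\,(yR_\triangledown x\to z\nmid y)$ (for $z,x\in Z_1$); $xT'zv$ iff $\forall y\,(yTzv\to x\nmid y)$ (for $x,z\in Z_1$, $v\in Z_\partial$). A relation among $R'_\Diamond,R'_\Box,R'_\triangledown,T'$ is smooth iff every set obtained by fixing all but one of its argument places is stable (if it is a subset of $Z_1$) or co-stable (if a subset of $Z_\partial$). Frames are assumed separated with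 all four of these relations smooth. The double dual $R''_\triangledown\subseteq Z_1\times Z_\partial$ is defined by $xR''_\triangledown y$ iff $\forall z\in Z_1\,(xR'_\triangledown z\to z\nmid y)$. *)

theory Defs
  imports Main
begin

text \<open>Elements of Z1 have type 'a, elements
of Zd (= Z_partial) have type 'b.\<close>

definition lprime :: "'a set \<Rightarrow> 'b set \<Rightarrow> ('a \<Rightarrow> 'b \<Rightarrow> bool) \<Rightarrow> 'a set \<Rightarrow> 'b set" where
  "lprime Z1 Zd I U = {y \<in> Zd. \<forall>u\<in>U. \<not> I u y}"

definition rprime :: "'a set \<Rightarrow> 'b set \<Rightarrow> ('a \<Rightarrow> 'b \<Rightarrow> bool) \<Rightarrow> 'b set \<Rightarrow> 'a set" where
  "rprime Z1 Zd I V = {x \<in> Z1. \<forall>v\<in>V. \<not> I x v}"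

definition gstable :: "'a set \<Rightarrow> 'b set \<Rightarrow> ('a \<Rightarrow> 'b \<Rightarrow> bool) \<Rightarrow> 'a set \<Rightarrow> bool" where
  "gstable Z1 Zd I U \<longleftrightarrow> U \<subseteq> Z1 \<and> rprime Z1 Zd I (lprime Z1 Zd I U) = U"

definition gcostable :: "'a set \<Rightarrow> 'b set \<Rightarrow> ('a \<Rightarrow> 'b \<Rightarrow> bool) \<Rightarrow> 'b set \<Rightarrow> bool" where
  "gcostable Z1 Zd I V \<longleftrightarrow> V \<subseteq> Zd \<and> lprime Z1 Zd I (rprime Z1 Zd I V) = V"

definition separated :: "'a set \<Rightarrow> 'b set \<Rightarrow> ('a \<Rightarrow> 'b \<Rightarrow> bool) \<Rightarrow> bool" where
  "separated Z1 Zd I \<longleftrightarrow>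
     (\<forall>u\<in>Z1. \<forall>w\<in>Z1. lprime Z1 Zd I {u} \<subseteq> lprime Z1 Zd I {w}
        \<and> lprime Z1 Zd I {w} \<subseteq> lprime Z1 Zd I {u} \<longrightarrow> u = w)
   \<and> (\<forall>u\<in>Zd. \<forall>w\<in>Zd. rprime Z1 Zd I {u} \<subseteq> rprime Z1 Zd I {w}
        \<and> rprime Z1 Zd I {w} \<subseteq> rprime Z1 Zd I {u} \<longrightarrow> u = w)"

definition RDdual :: "'a set \<Rightarrow> 'b set \<Rightarrow> ('a \<Rightarrow> 'b \<Rightarrow> bool) \<Rightarrow> ('a \<Rightarrow> 'a \<Rightarrow> bool) \<Rightarrow> 'b \<Rightarrow> 'a \<Rightarrow> bool" where
  "RDdual Z1 Zd I RD y z \<longleftrightarrow> (\<forall>x\<in>Z1. RD x z \<longrightarrow> \<not> I x y)"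

definition RBdual :: "'a set \<Rightarrow> 'b set \<Rightarrow> ('a \<Rightarrow> 'b \<Rightarrow> bool) \<Rightarrow> ('b \<Rightarrow> 'b \<Rightarrow> bool) \<Rightarrow> 'a \<Rightarrow> 'b \<Rightarrow> bool" where
  "RBdual Z1 Zd I RB x v \<longleftrightarrow> (\<forall>y\<in>Zd. RB y v \<longrightarrow> \<not> I x y)"

definition RTdual :: "'a set \<Rightarrow> 'b set \<Rightarrow> ('a \<Rightarrow> 'b \<Rightarrow> bool) \<Rightarrow> ('b \<Rightarrow> 'a \<Rightarrow> bool) \<Rightarrow> 'a \<Rightarrow> 'a \<Rightarrow> bool" where
  "RTdual Z1 Zd I RT z x \<longleftrightarrow> (\<forall>y\<in>Zd. RT y x \<longrightarrow> \<not> I z y)"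

definition Tdual :: "'a set \<Rightarrow> 'b set \<Rightarrow> ('a \<Rightarrow> 'b \<Rightarrow> bool) \<Rightarrow> ('b \<Rightarrow> 'a \<Rightarrow> 'b \<Rightarrow> bool) \<Rightarrow> 'a \<Rightarrow> 'a \<Rightarrow> 'b \<Rightarrow> bool" where
  "Tdual Z1 Zd I T x z v \<longleftrightarrow> (\<forall>y\<in>Zd. T y z v \<longrightarrow> \<not> I x y)"

definition RTddual :: "'a set \<Rightarrow> 'b set \<Rightarrow> ('a \<Rightarrow> 'b \<Rightarrow> bool) \<Rightarrow> ('b \<Rightarrow> 'a \<Rightarrow> bool) \<Rightarrow> 'a \<Rightarrow> 'b \<Rightarrow> bool" where
  "RTddual Z1 Zd I RT x y \<longleftrightarrow> (\<forall>z\<in>Z1. RTdual Z1 Zd I RT x z \<longrightarrow> \<not> I z y)"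

definition frame ::
  "'a set \<Rightarrow> 'b set \<Rightarrow> ('a \<Rightarrow> 'b \<Rightarrow> bool) \<Rightarrow> ('a \<Rightarrow> 'a \<Rightarrow> bool) \<Rightarrow> ('b \<Rightarrow> 'b \<Rightarrow> bool)
   \<Rightarrow> ('b \<Rightarrow> 'a \<Rightarrow> bool) \<Rightarrow> ('b \<Rightarrow> 'a \<Rightarrow> 'b \<Rightarrow> bool) \<Rightarrow> bool" where
  "frame Z1 Zd I RD RB RT T \<longleftrightarrow>
     Z1 \<noteq> {} \<and> Zd \<noteq> {}
   \<and> (\<forall>x y. I x y \<longrightarrow> x \<in> Z1 \<and> y \<in> Zd)
   \<and> (\<forall>x z. RD x z \<longrightarrow> x \<in> Z1 \<and> z \<in> Z1)
   \<and> (\<forall>y v. RB y v \<longrightarrow> y \<in> Zd \<and> v \<in> Zd)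
   \<and> (\<forall>y x. RT y x \<longrightarrow> y \<in> Zd \<and> x \<in> Z1)
   \<and> (\<forall>y z v. T y z v \<longrightarrow> y \<in> Zd \<and> z \<in> Z1 \<and> v \<in> Zd)
   \<and> separated Z1 Zd I
   \<comment> \<open>smoothness of R'_Diamond\<close>
   \<and> (\<forall>z\<in>Z1. gcostable Z1 Zd I {y \<in> Zd. RDdual Z1 Zd I RD y z})
   \<and> (\<forall>y\<in>Zd. gstable Z1 Zd I {z \<in> Z1. RDdual Z1 Zd I RD y z})
   \<comment> \<open>smoothness of R'_Box\<close>
   \<and> (\<forall>v\<in>Zd. gstable Z1 Zd I {x \<in> Z1. RBdual Z1 Zd I RB x v})
   \<and> (\<forall>x\<in>Z1. gcostable Z1 Zd I {v \<in> Zd. RBdual Z1 Zd I RB x v})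
   \<comment> \<open>smoothness of R'_triangledown\<close>
   \<and> (\<forall>x\<in>Z1. gstable Z1 Zd I {z \<in> Z1. RTdual Z1 Zd I RT z x})
   \<and> (\<forall>z\<in>Z1. gstable Z1 Zd I {x \<in> Z1. RTdual Z1 Zd I RT z x})
   \<comment> \<open>smoothness of T'\<close>
   \<and> (\<forall>z\<in>Z1. \<forall>v\<in>Zd. gstable Z1 Zd I {x \<in> Z1. Tdual Z1 Zd I T x z v})
   \<and> (\<forall>x\<in>Z1. \<forall>v\<in>Zd. gstable Z1 Zd I {z \<in> Z1. Tdual Z1 Zd I T x z v})
   \<and> (\<forall>x\<in>Z1. \<forall>z\<in>Z1. gcostable Z1 Zd I {v \<in> Zd. Tdual Z1 Zd I T x z v})"

definition blacktri :: "'a set \<Rightarrow> 'b set \<Rightarrow> ('b \<Rightarrow> 'a \<Rightarrow> bool) \<Rightarrow> 'a set \<Rightarrow> 'b set" where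
  "blacktri Z1 Zd RT U = {y \<in> Zd. \<exists>x\<in>Z1. RT y x \<and> x \<in> U}"

definition boxtimes :: "'a set \<Rightarrow> 'b set \<Rightarrow> ('a \<Rightarrow> 'b \<Rightarrow> bool) \<Rightarrow> ('b \<Rightarrow> 'a \<Rightarrow> bool) \<Rightarrow> 'b set \<Rightarrow> 'a set" where
  "boxtimes Z1 Zd I RT V = {x \<in> Z1. \<forall>y\<in>Zd. RTddual Z1 Zd I RT x y \<longrightarrow> y \<in> V}"

definition tri :: "'a set \<Rightarrow> 'b set \<Rightarrow> ('a \<Rightarrow> 'b \<Rightarrow> bool) \<Rightarrow> ('b \<Rightarrow> 'a \<Rightarrow> bool) \<Rightarrow> 'a set \<Rightarrow> 'a set" where
  "tri Z1 Zd I RT A = rprime Z1 Zd I (blacktri Z1 Zd RT A)"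

end

theory Submission
  imports Defs
begin

text \<open>Writing \<open>S z\<close> for the section \<open>{x. z R'\<^sub>\<triangledown> x}\<close>, one has
  \<open>\<triangledown>A = {z. A \<subseteq> S z}\<close> and \<open>\<boxtimes>V = {z. (S z)' \<subseteq> V}\<close>. By smoothness every \<open>S z\<close> is stable,
  and for a stable \<open>S\<close> the Galois connection gives \<open>S' \<subseteq> A' \<longleftrightarrow> A \<subseteq> S\<close>; hence \<open>\<triangledown>A = \<boxtimes>A'\<close>.
  The statements about a co-stable \<open>B\<close> are the instance \<open>A = B'\<close>, which is stable with \<open>A' = B\<close>.\<close>

lemma subset_rprime_lprime:
  assumes "U \<subseteq> Z1"
  shows "U \<subseteq> rprime Z1 Zd I (lprime Z1 Zd I U)"
  using assms unfolding rprime_def lprime_def by blast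

lemma rprime_antimono:
  assumes "V \<subseteq> W"
  shows "rprime Z1 Zd I W \<subseteq> rprime Z1 Zd I V"
  using assms unfolding rprime_def by blast

lemma gstable_rprime:
  assumes "V \<subseteq> Zd"
  shows "gstable Z1 Zd I (rprime Z1 Zd I V)"
  using assms unfolding gstable_def lprime_def rprime_def by blast

lemma lprime_subset_lprime_iff:
  assumes S: "gstable Z1 Zd I S" and U: "U \<subseteq> Z1"
  shows "lprime Z1 Zd I S \<subseteq> lprime Z1 Zd I U \<longleftrightarrow> U \<subseteq> S"
proof
  assume "lprime Z1 Zd I S \<subseteq> lprime Z1 Zd I U"
  then have "rprime Z1 Zd I (lprime Z1 Zd I U) \<subseteq> rprime Z1 Zd I (lprime Z1 Zd I S)"
    by (rule rprime_antimono)
  with subset_rprime_lprime[OF U] S show "U \<subseteq> S"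
    unfolding gstable_def by blast
next
  assume "U \<subseteq> S"
  then show "lprime Z1 Zd I S \<subseteq> lprime Z1 Zd I U"
    unfolding lprime_def by blast
qed

lemma tri_eq_RTdual_sections:
  assumes "A \<subseteq> Z1"
  shows "tri Z1 Zd I RT A = {z \<in> Z1. A \<subseteq> {x \<in> Z1. RTdual Z1 Zd I RT z x}}"
  using assms unfolding tri_def rprime_def blacktri_def RTdual_def by blast

lemma boxtimes_eq_lprime_RTdual_sections:
  "boxtimes Z1 Zd I RT V = {z \<in> Z1. lprime Z1 Zd I {x \<in> Z1. RTdual Z1 Zd I RT z x} \<subseteq> V}"
  unfolding boxtimes_def RTddual_def lprime_def by blast

lemma frame_gstable_RTdual_section:
  assumes "frame Z1 Zd I RD RB RT T" and "z \<in> Z1"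
  shows "gstable Z1 Zd I {x \<in> Z1. RTdual Z1 Zd I RT z x}"
  using assms unfolding frame_def by blast

lemma tri_eq_boxtimes_lprime:
  assumes smooth: "\<And>z. z \<in> Z1 \<Longrightarrow> gstable Z1 Zd I {x \<in> Z1. RTdual Z1 Zd I RT z x}"
    and A: "gstable Z1 Zd I A"
  shows "tri Z1 Zd I RT A = boxtimes Z1 Zd I RT (lprime Z1 Zd I A)"
proof -
  have "A \<subseteq> Z1"
    using A unfolding gstable_def by blast
  then show ?thesis
    unfolding tri_eq_RTdual_sections[OF \<open>A \<subseteq> Z1\<close>] boxtimes_eq_lprime_RTdual_sections
    using lprime_subset_lprime_iff[OF smooth] by blast
qed

theorem proposition2p17:
  fixes Z1 :: "'a set" and Zd :: "'b set" and I :: "'a \<Rightarrow> 'b \<Rightarrow> bool"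
    and RD :: "'a \<Rightarrow> 'a \<Rightarrow> bool" and RB :: "'b \<Rightarrow> 'b \<Rightarrow> bool"
    and RT :: "'b \<Rightarrow> 'a \<Rightarrow> bool" and T :: "'b \<Rightarrow> 'a \<Rightarrow> 'b \<Rightarrow> bool"
    and A :: "'a set" and B :: "'b set"
  assumes "frame Z1 Zd I RD RB RT T"
    and "gstable Z1 Zd I A"
    and "gcostable Z1 Zd I B"
  shows "rprime Z1 Zd I (blacktri Z1 Zd RT A) = tri Z1 Zd I RT A
       \<and> tri Z1 Zd I RT A = boxtimes Z1 Zd I RT (lprime Z1 Zd I A)
       \<and> tri Z1 Zd I RT (rprime Z1 Zd I B) = boxtimes Z1 Zd I RT B
       \<and> boxtimes Z1 Zd I RT B = rprime Z1 Zd I (blacktri Z1 Zd RT (rprime Z1 Zd I B))"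
proof -
  note smooth = frame_gstable_RTdual_section[OF assms(1)]
  have A: "tri Z1 Zd I RT A = boxtimes Z1 Zd I RT (lprime Z1 Zd I A)"
    using tri_eq_boxtimes_lprime[OF smooth assms(2)] .
  have "B \<subseteq> Zd" and "lprime Z1 Zd I (rprime Z1 Zd I B) = B"
    using assms(3) unfolding gcostable_def by blast+
  then have B: "tri Z1 Zd I RT (rprime Z1 Zd I B) = boxtimes Z1 Zd I RT B"
    using tri_eq_boxtimes_lprime[OF smooth gstable_rprime[OF \<open>B \<subseteq> Zd\<close>]] by simp
  show ?thesis
    using A B unfolding tri_def by simp
qed

end
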